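(* Let $G$ be a finite two-player zero-sum simultaneous-move game with perfect information on which SM-MCTS is run, let $h$ be a decision node of $G$, and let $\epsilon,c\ge0$. Let $A$ be an $\epsilon$-Hannan consistent algorithm which generates the sequence of actions $(i(t))$ of player 1 at $h$, and let $(j(t))$ be the actions chosen by the adversary (player 2) at $h$. Let $v_{ij}$ be the value of the subgame rooted at the child $h_{ij}$. If almost surely $\limsup_{n\to\infty}|\bar s_{ij}(n)-v_{ij}|\le c\epsilon$ for each $i,j$, and $A$ is $\epsilon$-UPO, then almost surely \[\limsup_{t\to\infty}\frac1t\left(\max_{i_0}\sum_{s=1}^t v_{i_0j(s)}-\sum_{s=1}^t v_{i(s)j(s)}\right)\le 2(c+1)\epsilon.\] Consequently the choice of actions $(i(t))$ made by $A$ is $2(c+1)\epsilon$-Hannan consistent with respect to the matrix game $(v_{ij})$.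
   Context: Game: finite rooted tree; decision nodes $h$ have finite action sets $\mathcal A_1(h),\mathcal A_2(h)$, joint action $(i,j)$ leading to child $h_{ij}$; terminal utilities $u_1\in[0,1]$, $u_2=-u_1$; the value of a subgame is its minimax value. SM-MCTS: each node of the search tree holds one bandit-algorithm instance per player; at each visit of $h$ the instances choose $(i,j)$, the search recursively returns a value $x$ from $h_{ij}$, player 1's instance at $h$ is updated with reward $x$ (player 2's with $1-x$), and $x$ is passed upward. Index visits of $h$ by $t=1,2,\dots$; $i(t),j(t)$ are the actions chosen; $t_{ij}$ is the number of visits $\le t$ with joint action $(i,j)$. $s_{ij}(n)$ is the value returned from $h_{ij}$ the $n$-th time $(i,j)$ is chosen at $h$; $\bar s_{ij}(n)=\frac1n\sum_{m\le n}s_{ij}(m)$. The bandit reward of action $i$ for player 1 at visit $t$ is $x_i(t)=s_{ij(t)}((t-1)_{ij(t)}+1)$, i.e. the value that would be observed the next time $(i,j(t))$ is chosen. Bandit regret $r(t)=\frac1t(\max_k\sum_{s\le t}x_k(s)-\sum_{s\le t}x_{i(s)}(s))$; $\epsilon$-Hannan consistent: $\limsup_t r(t)\le\epsilon$ a.s. against every adversary. UPO: let $t^*_{ij}(k)=\min\{t:t_{ij}=k\}$ (with $t^*_{ij}(0)=0$), $w_{ij}(n)=1+|\{t:t^*_{ij}(n-1)\le t\le t^*_{ij}(n),\ j(t)=j,\ i(t)\ne i\}|$, $\tilde s_{ij}(n)=\frac{\sum_{m\le n}w_{ij}(m)s_{ij}(m)}{\sum_{m\le n}w_{ij}(m)}$.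 $A$ is $\epsilon$-UPO if for every such game, every node $h$ and all $i,j$, almost surely $\limsup_{n\to\infty}|\tilde s_{ij}(n)-\bar s_{ij}(n)|\le\epsilon$.
   Formalization: The $\epsilon$-UPO property at h also demands that, almost surely, every joint action (i,j) be chosen at h infinitely often, so that each $t^*_{ij}(n)$ exists. The paper assumes this as well. *)

theory Defs
  imports "HOL-Probability.Probability"
begin

text \<open>Run of SM-MCTS at a fixed decision node h. Visits of h are indexed by
  t = 1, 2, ...; ia t and jb t are the actions of player 1 and 2 at visit t;
  s a b n is the value returned from the child h_ab the n-th time (n = 1, 2, ...)
  the joint action (a,b) is chosen at h. Values at index 0 are junk.\<close>

definition visits :: "(nat \<Rightarrow> 'a) \<Rightarrow> (nat \<Rightarrow> 'b) \<Rightarrow> 'a \<Rightarrow> 'b \<Rightarrow> nat \<Rightarrow> nat" where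
  "visits ia jb a b t = card {u \<in> {1..t}. ia u = a \<and> jb u = b}"

definition first_visit :: "(nat \<Rightarrow> 'a) \<Rightarrow> (nat \<Rightarrow> 'b) \<Rightarrow> 'a \<Rightarrow> 'b \<Rightarrow> nat \<Rightarrow> nat" where
  "first_visit ia jb a b k = (LEAST t. visits ia jb a b t = k)"

definition avg :: "(nat \<Rightarrow> real) \<Rightarrow> nat \<Rightarrow> real" where
  "avg x n = (\<Sum>m = 1..n. x m) / real n"

definition upo_weight :: "(nat \<Rightarrow> 'a) \<Rightarrow> (nat \<Rightarrow> 'b) \<Rightarrow> 'a \<Rightarrow> 'b \<Rightarrow> nat \<Rightarrow> nat" where
  "upo_weight ia jb a b n = 1 + card {t. 1 \<le> t \<and> first_visit ia jb a b (n - 1) \<le> t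
       \<and> t \<le> first_visit ia jb a b n \<and> jb t = b \<and> ia t \<noteq> a}"

definition wavg :: "(nat \<Rightarrow> 'a) \<Rightarrow> (nat \<Rightarrow> 'b) \<Rightarrow> 'a \<Rightarrow> 'b \<Rightarrow> (nat \<Rightarrow> real) \<Rightarrow> nat \<Rightarrow> real" where
  "wavg ia jb a b x n =
     (\<Sum>m = 1..n. real (upo_weight ia jb a b m) * x m) / (\<Sum>m = 1..n. real (upo_weight ia jb a b m))"

definition bandit_reward :: "(nat \<Rightarrow> 'a) \<Rightarrow> (nat \<Rightarrow> 'b) \<Rightarrow> ('a \<Rightarrow> 'b \<Rightarrow> nat \<Rightarrow> real) \<Rightarrow> 'a \<Rightarrow> nat \<Rightarrow> real" where
  "bandit_reward ia jb s k t = s k (jb t) (visits ia jb k (jb t) (t - 1) + 1)"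

definition bandit_regret :: "'a set \<Rightarrow> (nat \<Rightarrow> 'a) \<Rightarrow> (nat \<Rightarrow> 'b) \<Rightarrow> ('a \<Rightarrow> 'b \<Rightarrow> nat \<Rightarrow> real) \<Rightarrow> nat \<Rightarrow> real" where
  "bandit_regret I ia jb s t =
     (Max ((\<lambda>k. \<Sum>u = 1..t. bandit_reward ia jb s k u) ` I)
      - (\<Sum>u = 1..t. bandit_reward ia jb s (ia u) u)) / real t"

definition matrix_regret :: "'a set \<Rightarrow> (nat \<Rightarrow> 'a) \<Rightarrow> (nat \<Rightarrow> 'b) \<Rightarrow> ('a \<Rightarrow> 'b \<Rightarrow> real) \<Rightarrow> nat \<Rightarrow> real" where
  "matrix_regret I ia jb v t =
     (Max ((\<lambda>k. \<Sum>u = 1..t. v k (jb u)) ` I) - (\<Sum>u = 1..t. v (ia u) (jb u))) / real t"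

text \<open>The UPO property at (a,b) on one sample path: the quantities t*_ab(n) are all
  defined (so that tilde s is defined) and limsup |tilde s - bar s| <= eps.\<close>
definition upo_at :: "real \<Rightarrow> (nat \<Rightarrow> 'a) \<Rightarrow> (nat \<Rightarrow> 'b) \<Rightarrow> ('a \<Rightarrow> 'b \<Rightarrow> nat \<Rightarrow> real) \<Rightarrow> 'a \<Rightarrow> 'b \<Rightarrow> bool" where
  "upo_at \<epsilon> ia jb s a b \<longleftrightarrow>
     (\<forall>n. \<exists>t. visits ia jb a b t = n) \<and>
     limsup (\<lambda>n. ereal \<bar>wavg ia jb a b (s a b) n - avg (s a b) n\<bar>) \<le> ereal \<epsilon>"

end

theory Submission
  imports Defs
begin

text \<open>Fix an action a of player 1 and an opponent action b. At a visit u with \<open>j(u) = b\<close>, the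
  bandit reward of a is the next, not yet observed sample of (a,b). Grouping these visits by the
  index n of that sample, the n-th group consists of \<open>t*_ab(n)\<close> and the visits since
  \<open>t*_ab(n-1)\<close> at which b met another action, so it has exactly \<open>w_ab(n)\<close> elements; only
  the last group is incomplete. Hence the cumulative bandit reward of a against b, divided by the
  number of these visits, lies between the weighted averages \<open>s~_ab(N)\<close> and \<open>s~_ab(N+1)\<close>, which
  UPO and the convergence of the plain averages put eventually within \<open>(c+1)\<epsilon>\<close> of \<open>v_ab\<close>. The
  rewards actually collected add up to plain averages of samples, within \<open>c\<epsilon>\<close> of \<open>v_ab\<close>. So the
  matrix regret exceeds the bandit regret by at most \<open>(2c+1)\<epsilon>\<close>.\<close>

lemma affine_nonpos_between:
  fixes p q m r :: real
  assumes "p \<le> 0" and "p + r * q \<le> 0" and "0 \<le> m" and "m \<le> r"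
  shows "p + m * q \<le> 0"
proof (cases "q \<le> 0")
  case True
  then have "m * q \<le> 0" using \<open>0 \<le> m\<close> by (simp add: mult_nonneg_nonpos)
  then show ?thesis using assms(1) by linarith
next
  case False
  then have "m * q \<le> r * q" using \<open>m \<le> r\<close> by (simp add: mult_right_mono)
  then show ?thesis using assms(2) by linarith
qed

lemma abs_divide_diff_le_iff:
  fixes A W v e :: real
  assumes "0 < W"
  shows "\<bar>A / W - v\<bar> \<le> e \<longleftrightarrow> \<bar>A - v * W\<bar> \<le> e * W"
proof -
  have "A / W - v = (A - v * W) / W" using assms by (simp add: field_simps)
  then show ?thesis using assms by (simp add: abs_divide pos_divide_le_eq)
qed

text \<open>The deviation is affine in \<open>m\<close>, hence bounded by its values at \<open>m = 0\<close> and \<open>m = r\<close>.\<close>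
lemma abs_intermediate_average_le:
  fixes A W r m x v e :: real
  assumes "0 < W" and "0 \<le> m" and "m \<le> r"
    and "\<bar>A / W - v\<bar> \<le> e" and "\<bar>(A + r * x) / (W + r) - v\<bar> \<le> e"
  shows "\<bar>A + m * x - v * (W + m)\<bar> \<le> e * (W + m)"
proof -
  have lo: "\<bar>A - v * W\<bar> \<le> e * W"
    using assms(1,4) abs_divide_diff_le_iff by blast
  have hi: "\<bar>A + r * x - v * (W + r)\<bar> \<le> e * (W + r)"
    using assms abs_divide_diff_le_iff[of "W + r"] by simp
  have "(A - v * W - e * W) + m * (x - v - e) \<le> 0"
  proof (rule affine_nonpos_between[OF _ _ assms(2,3)])
    show "A - v * W - e * W \<le> 0" using lo by (simp add: abs_le_iff)
    show "A - v * W - e * W + r * (x - v - e) \<le> 0" using hi by (simp add: abs_le_iff algebra_simps)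
  qed
  moreover have "(v * W - A - e * W) + m * (v - x - e) \<le> 0"
  proof (rule affine_nonpos_between[OF _ _ assms(2,3)])
    show "v * W - A - e * W \<le> 0" using lo by (simp add: abs_le_iff)
    show "v * W - A - e * W + r * (v - x - e) \<le> 0" using hi by (simp add: abs_le_iff algebra_simps)
  qed
  ultimately show ?thesis by (simp add: abs_le_iff algebra_simps)
qed

lemma Max_image_le_Max_image_add:
  fixes F G :: "'a \<Rightarrow> real"
  assumes "finite I" and "I \<noteq> {}" and "\<And>k. k \<in> I \<Longrightarrow> F k \<le> G k + e"
  shows "Max (F ` I) \<le> Max (G ` I) + e"
proof -
  have "Max (F ` I) \<in> F ` I" using assms(1,2) by simp
  then obtain k where "k \<in> I" and "Max (F ` I) = F k" by blast
  moreover have "G k \<le> Max (G ` I)" using assms(1) \<open>k \<in> I\<close> by simp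
  ultimately show ?thesis using assms(3) by fastforce
qed

lemma eventually_less_of_limsup_le:
  assumes "limsup (\<lambda>n. ereal (f n)) \<le> ereal L" and "0 < d"
  shows "eventually (\<lambda>n. f n < L + d) sequentially"
proof -
  have "limsup (\<lambda>n. ereal (f n)) < ereal (L + d)" using assms by (simp add: le_less_trans)
  then show ?thesis using Limsup_lessD by fastforce
qed

lemma visits_0 [simp]: "visits ia jb a b 0 = 0"
  by (simp add: visits_def)

lemma visits_Suc:
  "visits ia jb a b (Suc t) = visits ia jb a b t + (if ia (Suc t) = a \<and> jb (Suc t) = b then 1 else 0)"
proof -
  let ?S = "\<lambda>t. {u \<in> {1..t}. ia u = a \<and> jb u = b}"
  have "{1..Suc t} = insert (Suc t) {1..t}" by auto
  then have "?S (Suc t) = (if ia (Suc t) = a \<and> jb (Suc t) = b then insert (Suc t) (?S t) else ?S t)"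
    by auto
  then show ?thesis unfolding visits_def by simp
qed

lemma mono_visits: "mono (visits ia jb a b)"
  by (simp add: mono_iff_le_Suc visits_Suc)

lemma visits_intermediate_value:
  "n \<le> visits ia jb a b t \<Longrightarrow> \<exists>t'\<le>t. visits ia jb a b t' = n"
proof (induction t)
  case (Suc t)
  show ?case
  proof (cases "n \<le> visits ia jb a b t")
    case True
    then show ?thesis using Suc.IH le_SucI by blast
  next
    case False
    then have "visits ia jb a b (Suc t) = n" using Suc.prems by (simp add: visits_Suc split: if_splits)
    then show ?thesis by blast
  qed
qed simp

lemma visits_at_play:
  "1 \<le> u \<Longrightarrow> visits ia jb (ia u) (jb u) u = visits ia jb (ia u) (jb u) (u - 1) + 1"
  using visits_Suc[of ia jb "ia u" "jb u" "u - 1"] by simp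

lemma sum_samples_Suc:
  "(\<Sum>n = 1..visits ia jb a b (Suc t). g n) = (\<Sum>n = 1..visits ia jb a b t. g n) +
     (if (ia (Suc t), jb (Suc t)) = (a, b) then g (visits ia jb a b (Suc t)) else (0 :: real))"
  by (auto simp: visits_Suc)

lemma sum_played_samples:
  fixes f :: "'a \<Rightarrow> 'b \<Rightarrow> nat \<Rightarrow> real"
  assumes "finite I" and "finite J" and played: "\<And>u. 1 \<le> u \<Longrightarrow> (ia u, jb u) \<in> I \<times> J"
  shows "(\<Sum>u = 1..t. f (ia u) (jb u) (visits ia jb (ia u) (jb u) u)) =
         (\<Sum>(a, b)\<in>I \<times> J. \<Sum>n = 1..visits ia jb a b t. f a b n)"
proof (induction t)
  case (Suc t)
  have "(\<Sum>(a, b)\<in>I \<times> J. \<Sum>n = 1..visits ia jb a b (Suc t). f a b n) =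
      (\<Sum>(a, b)\<in>I \<times> J. \<Sum>n = 1..visits ia jb a b t. f a b n) +
      f (ia (Suc t)) (jb (Suc t)) (visits ia jb (ia (Suc t)) (jb (Suc t)) (Suc t))"
  proof -
    define F where "F a b = f a b (visits ia jb a b (Suc t))" for a b
    have "(\<Sum>(a, b)\<in>I \<times> J. \<Sum>n = 1..visits ia jb a b (Suc t). f a b n) =
        (\<Sum>p\<in>I \<times> J. (case p of (a, b) \<Rightarrow> \<Sum>n = 1..visits ia jb a b t. f a b n) +
          (if (ia (Suc t), jb (Suc t)) = p then case_prod F p else 0))"
      by (intro sum.cong refl) (clarsimp simp only: sum_samples_Suc F_def)
    also have "\<dots> = (\<Sum>(a, b)\<in>I \<times> J. \<Sum>n = 1..visits ia jb a b t. f a b n) +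
        F (ia (Suc t)) (jb (Suc t))"
      using assms played[of "Suc t"] by (simp only: sum.distrib sum.delta) simp
    finally show ?thesis unfolding F_def .
  qed
  then show ?case using Suc.IH by simp
qed simp

lemma sum_group_by_column:
  fixes g :: "nat \<Rightarrow> real"
  assumes "finite J" and "\<And>u. 1 \<le> u \<Longrightarrow> jb u \<in> J"
  shows "(\<Sum>u = 1..t. g u) = (\<Sum>b\<in>J. \<Sum>u\<in>{u \<in> {1..t}. jb u = b}. g u)"
  using assms by (intro sum.group[symmetric]) auto

lemma sum_eq_avg: "(\<Sum>m = 1..n. x m) = real n * avg x n"
  by (simp add: avg_def)

lemma upo_weight_pos: "0 < upo_weight ia jb a b n"
  by (simp add: upo_weight_def)

text \<open>At the visits u in \<open>pending_times ia jb a b n\<close>, the bandit reward of action a is the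
  sample \<open>s a b n\<close>.\<close>
definition pending_times :: "(nat \<Rightarrow> 'a) \<Rightarrow> (nat \<Rightarrow> 'b) \<Rightarrow> 'a \<Rightarrow> 'b \<Rightarrow> nat \<Rightarrow> nat set" where
  "pending_times ia jb a b n = {u. 1 \<le> u \<and> jb u = b \<and> visits ia jb a b (u - 1) + 1 = n}"

locale recurrent_joint_action =
  fixes ia :: "nat \<Rightarrow> 'a" and jb :: "nat \<Rightarrow> 'b" and a :: 'a and b :: 'b
  assumes count_attained: "\<exists>t. visits ia jb a b t = n"
begin

abbreviation cnt where "cnt \<equiv> visits ia jb a b"
abbreviation tstar where "tstar \<equiv> first_visit ia jb a b"

lemma cnt_tstar [simp]: "cnt (tstar n) = n"
  unfolding first_visit_def using count_attained by (rule LeastI_ex)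

lemma tstar_le_iff: "tstar n \<le> t \<longleftrightarrow> n \<le> cnt t"
proof
  assume "tstar n \<le> t"
  then have "cnt (tstar n) \<le> cnt t" by (rule monoD[OF mono_visits])
  then show "n \<le> cnt t" by simp
next
  assume "n \<le> cnt t"
  then obtain t' where "t' \<le> t" "cnt t' = n" using visits_intermediate_value by meson
  moreover from \<open>cnt t' = n\<close> have "tstar n \<le> t'" unfolding first_visit_def by (rule Least_le)
  ultimately show "tstar n \<le> t" by simp
qed

lemma less_tstar_iff: "t < tstar n \<longleftrightarrow> cnt t < n"
  using tstar_le_iff not_le by blast

lemma tstar_0 [simp]: "tstar 0 = 0"
  using tstar_le_iff[of 0 0] by simp

lemma played_at_tstar:
  assumes "1 \<le> n"
  shows "1 \<le> tstar n" and "ia (tstar n) = a" and "jb (tstar n) = b"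
proof -
  show pos: "1 \<le> tstar n" using less_tstar_iff[of 0 n] assms by simp
  have "cnt (tstar n - 1) < cnt (tstar n)" using less_tstar_iff[of "tstar n - 1" n] pos by simp
  moreover have "cnt (tstar n) = cnt (tstar n - 1) + (if ia (tstar n) = a \<and> jb (tstar n) = b then 1 else 0)"
    using visits_Suc[of ia jb a b "tstar n - 1"] pos by simp
  ultimately show "ia (tstar n) = a" "jb (tstar n) = b" by (auto split: if_splits)
qed

lemma filterlim_cnt: "filterlim cnt at_top sequentially"
  unfolding filterlim_at_top eventually_sequentially by (metis tstar_le_iff)

lemma mem_pending_times_iff:
  assumes "1 \<le> n"
  shows "u \<in> pending_times ia jb a b n \<longleftrightarrow> 1 \<le> u \<and> jb u = b \<and> tstar (n - 1) < u \<and> u \<le> tstar n"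
proof -
  have "cnt (u - 1) + 1 = n \<longleftrightarrow> n - 1 \<le> cnt (u - 1) \<and> cnt (u - 1) < n"
    using assms by linarith
  also have "\<dots> \<longleftrightarrow> tstar (n - 1) \<le> u - 1 \<and> u - 1 < tstar n"
    by (simp only: tstar_le_iff less_tstar_iff)
  finally show ?thesis unfolding pending_times_def by (cases u) auto
qed

lemma not_played_between_tstar:
  assumes "tstar (n - 1) < u" and "u < tstar n"
  shows "\<not> (ia u = a \<and> jb u = b)"
proof
  assume played: "ia u = a \<and> jb u = b"
  have "1 \<le> u" using assms(1) by simp
  then have "cnt u = cnt (u - 1) + 1" using visits_Suc[of ia jb a b "u - 1"] played by simp
  moreover have "n - 1 \<le> cnt (u - 1)" using assms(1) tstar_le_iff[of "n - 1" "u - 1"] by linarith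
  moreover have "cnt u < n" using assms(2) less_tstar_iff by blast
  ultimately show False by linarith
qed

lemma pending_times_eq:
  assumes "1 \<le> n"
  shows "pending_times ia jb a b n = insert (tstar n)
    {t. 1 \<le> t \<and> tstar (n - 1) \<le> t \<and> t \<le> tstar n \<and> jb t = b \<and> ia t \<noteq> a}"
proof (rule set_eqI)
  fix u
  have ia_prev: "ia (tstar (n - 1)) = a" if "1 \<le> tstar (n - 1)"
    using that played_at_tstar(2)[of "n - 1"] by (cases "n - 1 = 0") auto
  have "tstar (n - 1) < tstar n"
    using assms less_tstar_iff by simp
  show "u \<in> pending_times ia jb a b n \<longleftrightarrow> u \<in> insert (tstar n)
    {t. 1 \<le> t \<and> tstar (n - 1) \<le> t \<and> t \<le> tstar n \<and> jb t = b \<and> ia t \<noteq> a}"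
  proof (cases "u = tstar n")
    case True
    have "tstar n \<in> pending_times ia jb a b n"
      unfolding mem_pending_times_iff[OF assms] using played_at_tstar[OF assms] \<open>tstar (n - 1) < tstar n\<close>
      by blast
    then show ?thesis unfolding True by (meson insertI1)
  next
    case False
    then have "u \<in> pending_times ia jb a b n \<longleftrightarrow> 1 \<le> u \<and> jb u = b \<and> tstar (n - 1) < u \<and> u < tstar n"
      unfolding mem_pending_times_iff[OF assms] by auto
    also have "\<dots> \<longleftrightarrow> 1 \<le> u \<and> tstar (n - 1) \<le> u \<and> u < tstar n \<and> jb u = b \<and> ia u \<noteq> a"
      using not_played_between_tstar[of n u] ia_prev by (cases "u = tstar (n - 1)") auto
    finally show ?thesis using False by auto
  qed
qed

lemma finite_pending_times: "1 \<le> n \<Longrightarrow> finite (pending_times ia jb a b n)"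
  unfolding pending_times_eq by (auto intro: finite_subset[of _ "{..tstar n}"])

lemma card_pending_times: "1 \<le> n \<Longrightarrow> card (pending_times ia jb a b n) = upo_weight ia jb a b n"
  using finite_pending_times played_at_tstar(2) unfolding pending_times_eq upo_weight_def
  by (subst card_insert_disjoint) auto

lemma pending_times_subset: "n \<le> cnt t \<Longrightarrow> pending_times ia jb a b n \<subseteq> {1..t}"
proof
  fix u assume "n \<le> cnt t" and u: "u \<in> pending_times ia jb a b n"
  then have "u - 1 < tstar n" and "tstar n \<le> t"
    using less_tstar_iff tstar_le_iff unfolding pending_times_def by auto
  then show "u \<in> {1..t}" using u unfolding pending_times_def by simp
qed

lemma sum_pending_samples:
  "\<exists>m \<le> upo_weight ia jb a b (cnt t + 1). \<forall>f :: nat \<Rightarrow> real.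
     (\<Sum>u\<in>{u \<in> {1..t}. jb u = b}. f (cnt (u - 1) + 1)) =
       (\<Sum>n = 1..cnt t. real (upo_weight ia jb a b n) * f n) + real m * f (cnt t + 1)"
proof -
  let ?S = "{u \<in> {1..t}. jb u = b}"
  let ?block = "\<lambda>n. {u \<in> ?S. cnt (u - 1) + 1 = n}"
  have block_eq: "?block n = pending_times ia jb a b n \<inter> {1..t}" for n
    unfolding pending_times_def by auto
  have "?block (cnt t + 1) \<subseteq> pending_times ia jb a b (cnt t + 1)"
    unfolding block_eq by blast
  then have last_block: "card (?block (cnt t + 1)) \<le> upo_weight ia jb a b (cnt t + 1)"
    using card_mono[OF finite_pending_times] card_pending_times by fastforce
  have full_block: "card (?block n) = upo_weight ia jb a b n" if "n \<in> {1..cnt t}" for n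
    using that pending_times_subset[of n t] card_pending_times[of n] unfolding block_eq
    by (simp add: Int_absorb2)
  have "cnt (u - 1) + 1 \<in> {1..cnt t + 1}" if "u \<in> ?S" for u
  proof -
    have "cnt (u - 1) \<le> cnt t" using that by (intro monoD[OF mono_visits]) auto
    then show ?thesis by simp
  qed
  then have grouped: "(\<Sum>u\<in>?S. f (cnt (u - 1) + 1)) =
      (\<Sum>n = 1..cnt t + 1. \<Sum>u\<in>?block n. f (cnt (u - 1) + 1))" for f :: "nat \<Rightarrow> real"
    by (intro sum.group[symmetric]) auto
  have "(\<Sum>u\<in>?S. f (cnt (u - 1) + 1)) =
      (\<Sum>n = 1..cnt t. real (upo_weight ia jb a b n) * f n) + real (card (?block (cnt t + 1))) * f (cnt t + 1)"
    for f :: "nat \<Rightarrow> real"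
  proof -
    have "(\<Sum>u\<in>?block n. f (cnt (u - 1) + 1)) = real (card (?block n)) * f n" for n
      by (simp add: sum.cong[of "?block n" _ _ "\<lambda>_. f n"])
    then show ?thesis unfolding grouped using full_block by simp
  qed
  then show ?thesis using last_block by blast
qed

lemma abs_column_sum_deviation_le:
  fixes x :: "nat \<Rightarrow> real"
  assumes "1 \<le> cnt t"
    and "\<bar>wavg ia jb a b x (cnt t) - v\<bar> \<le> e" and "\<bar>wavg ia jb a b x (cnt t + 1) - v\<bar> \<le> e"
  shows "\<bar>(\<Sum>u\<in>{u \<in> {1..t}. jb u = b}. x (cnt (u - 1) + 1)) - v * real (card {u \<in> {1..t}. jb u = b})\<bar>
           \<le> e * real (card {u \<in> {1..t}. jb u = b})"
proof -
  let ?w = "\<lambda>n. real (upo_weight ia jb a b n)"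
  let ?N = "cnt t"
  obtain m where m: "m \<le> upo_weight ia jb a b (?N + 1)"
    and sums: "\<And>f :: nat \<Rightarrow> real. (\<Sum>u\<in>{u \<in> {1..t}. jb u = b}. f (cnt (u - 1) + 1)) =
       (\<Sum>n = 1..?N. ?w n * f n) + real m * f (?N + 1)"
    using sum_pending_samples by blast
  have "0 < (\<Sum>n = 1..?N. ?w n)"
    using assms(1) upo_weight_pos by (intro sum_pos) auto
  moreover have "\<bar>(\<Sum>n = 1..?N. ?w n * x n) / (\<Sum>n = 1..?N. ?w n) - v\<bar> \<le> e"
    using assms(2) unfolding wavg_def .
  moreover have "\<bar>((\<Sum>n = 1..?N. ?w n * x n) + ?w (?N + 1) * x (?N + 1)) / ((\<Sum>n = 1..?N. ?w n) + ?w (?N + 1)) - v\<bar> \<le> e"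
    using assms(3) unfolding wavg_def by simp
  ultimately have "\<bar>(\<Sum>n = 1..?N. ?w n * x n) + real m * x (?N + 1) - v * ((\<Sum>n = 1..?N. ?w n) + real m)\<bar>
      \<le> e * ((\<Sum>n = 1..?N. ?w n) + real m)"
    using m by (intro abs_intermediate_average_le) auto
  then show ?thesis using sums[of x] sums[of "\<lambda>_. 1"] by simp
qed


lemma eventually_estimates_at_cnt:
  fixes x :: "nat \<Rightarrow> real"
  assumes "limsup (\<lambda>n. ereal \<bar>wavg ia jb a b x n - avg x n\<bar>) \<le> ereal \<epsilon>"
    and "limsup (\<lambda>n. ereal \<bar>avg x n - v\<bar>) \<le> ereal (c * \<epsilon>)" and "0 < d"
  shows "eventually (\<lambda>t. 1 \<le> cnt t \<and>
      \<bar>wavg ia jb a b x (cnt t) - v\<bar> \<le> (c + 1) * \<epsilon> + 2 * d \<and>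
      \<bar>wavg ia jb a b x (cnt t + 1) - v\<bar> \<le> (c + 1) * \<epsilon> + 2 * d \<and>
      \<bar>avg x (cnt t) - v\<bar> \<le> c * \<epsilon> + d) sequentially"
proof -
  define close where "close n \<longleftrightarrow> 1 \<le> n \<and>
    \<bar>wavg ia jb a b x n - v\<bar> \<le> (c + 1) * \<epsilon> + 2 * d \<and> \<bar>avg x n - v\<bar> \<le> c * \<epsilon> + d" for n
  have "eventually close sequentially"
    using eventually_less_of_limsup_le[OF assms(1,3)] eventually_less_of_limsup_le[OF assms(2,3)]
      eventually_ge_at_top[of 1]
    by eventually_elim (auto simp: close_def algebra_simps)
  then have "eventually (\<lambda>n. close n \<and> close (Suc n)) sequentially"
    using eventually_sequentially_Suc[of close] eventually_conj by blast
  from filterlim_cnt[unfolded filterlim_iff, rule_format, OF this]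
  show ?thesis by eventually_elim (simp add: close_def)
qed
end

lemma upo_at_recurrent: "upo_at \<epsilon> ia jb s a b \<Longrightarrow> recurrent_joint_action ia jb a b"
  unfolding upo_at_def recurrent_joint_action_def by blast

lemma upo_at_eventually_estimates:
  assumes upo: "upo_at \<epsilon> ia jb s a b" and "limsup (\<lambda>n. ereal \<bar>avg (s a b) n - v\<bar>) \<le> ereal (c * \<epsilon>)"
    and "0 < d"
  shows "eventually (\<lambda>t. 1 \<le> visits ia jb a b t \<and>
      \<bar>wavg ia jb a b (s a b) (visits ia jb a b t) - v\<bar> \<le> (c + 1) * \<epsilon> + 2 * d \<and>
      \<bar>wavg ia jb a b (s a b) (visits ia jb a b t + 1) - v\<bar> \<le> (c + 1) * \<epsilon> + 2 * d \<and>
      \<bar>avg (s a b) (visits ia jb a b t) - v\<bar> \<le> c * \<epsilon> + d) sequentially"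
proof -
  interpret recurrent_joint_action ia jb a b using upo by (rule upo_at_recurrent)
  show ?thesis
    using upo assms(2,3) unfolding upo_at_def by (intro eventually_estimates_at_cnt) auto
qed

lemma sum_best_response_le:
  fixes s :: "'a \<Rightarrow> 'b \<Rightarrow> nat \<Rightarrow> real" and v :: "'a \<Rightarrow> 'b \<Rightarrow> real"
  assumes "finite J" and "\<And>u. 1 \<le> u \<Longrightarrow> jb u \<in> J"
    and column: "\<And>b. b \<in> J \<Longrightarrow> recurrent_joint_action ia jb k b \<and> 1 \<le> visits ia jb k b t \<and>
        \<bar>wavg ia jb k b (s k b) (visits ia jb k b t) - v k b\<bar> \<le> e \<and>
        \<bar>wavg ia jb k b (s k b) (visits ia jb k b t + 1) - v k b\<bar> \<le> e"
  shows "(\<Sum>u = 1..t. v k (jb u)) \<le> (\<Sum>u = 1..t. bandit_reward ia jb s k u) + e * real t"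
proof -
  let ?S = "\<lambda>b. {u \<in> {1..t}. jb u = b}"
  have column_le: "real (card (?S b)) * v k b \<le>
      (\<Sum>u\<in>?S b. s k b (visits ia jb k b (u - 1) + 1)) + e * real (card (?S b))"
    if "b \<in> J" for b
  proof -
    interpret recurrent_joint_action ia jb k b using column[OF that] by blast
    show ?thesis using abs_column_sum_deviation_le[of t "s k b" "v k b" e] column[OF that]
      by (simp add: abs_le_iff algebra_simps)
  qed
  have "(\<Sum>u = 1..t. v k (jb u)) = (\<Sum>b\<in>J. \<Sum>u\<in>?S b. v k (jb u))"
    by (rule sum_group_by_column[OF assms(1,2)])
  also have "\<dots> = (\<Sum>b\<in>J. \<Sum>u\<in>?S b. v k b)"
    by (intro sum.cong refl) simp
  also have "\<dots> \<le> (\<Sum>b\<in>J. (\<Sum>u\<in>?S b. s k b (visits ia jb k b (u - 1) + 1)) + e * real (card (?S b)))"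
    using column_le by (intro sum_mono) simp
  also have "\<dots> = (\<Sum>u = 1..t. bandit_reward ia jb s k u) + e * real t"
    using sum_group_by_column[OF assms(1,2), where g = "\<lambda>_. 1" and t = t]
      sum_group_by_column[OF assms(1,2), where g = "bandit_reward ia jb s k" and t = t]
    by (simp add: bandit_reward_def sum.distrib sum_distrib_left)
  finally show ?thesis .
qed

lemma sum_played_reward_le:
  fixes s :: "'a \<Rightarrow> 'b \<Rightarrow> nat \<Rightarrow> real" and v :: "'a \<Rightarrow> 'b \<Rightarrow> real"
  assumes "finite I" and "finite J" and played: "\<And>u. 1 \<le> u \<Longrightarrow> (ia u, jb u) \<in> I \<times> J"
    and close: "\<And>a b. a \<in> I \<Longrightarrow> b \<in> J \<Longrightarrow> \<bar>avg (s a b) (visits ia jb a b t) - v a b\<bar> \<le> e"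
  shows "(\<Sum>u = 1..t. bandit_reward ia jb s (ia u) u) \<le> (\<Sum>u = 1..t. v (ia u) (jb u)) + e * real t"
proof -
  have "(\<Sum>u = 1..t. bandit_reward ia jb s (ia u) u) =
      (\<Sum>u = 1..t. s (ia u) (jb u) (visits ia jb (ia u) (jb u) u))"
    by (intro sum.cong refl) (simp add: bandit_reward_def visits_at_play)
  also have "\<dots> = (\<Sum>(a, b)\<in>I \<times> J. \<Sum>n = 1..visits ia jb a b t. s a b n)"
    using assms(1,2) played by (rule sum_played_samples)
  also have "\<dots> \<le> (\<Sum>(a, b)\<in>I \<times> J. real (visits ia jb a b t) * v a b + e * real (visits ia jb a b t))"
  proof (intro sum_mono, clarify)
    fix a b assume "a \<in> I" "b \<in> J"
    then have "avg (s a b) (visits ia jb a b t) \<le> v a b + e" using close[of a b] by (simp add: abs_le_iff)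
    then show "(\<Sum>n = 1..visits ia jb a b t. s a b n) \<le> real (visits ia jb a b t) * v a b + e * real (visits ia jb a b t)"
      unfolding sum_eq_avg by (auto dest: mult_left_mono[of _ _ "real (visits ia jb a b t)"] simp: algebra_simps)
  qed
  also have "\<dots> = (\<Sum>u = 1..t. v (ia u) (jb u)) + e * real t"
    using sum_played_samples[OF assms(1,2) played, where f = "\<lambda>a b n. v a b" and t = t]
      sum_played_samples[OF assms(1,2) played, where f = "\<lambda>a b n. 1" and t = t]
    by (simp add: split_beta sum.distrib sum_distrib_left)
  finally show ?thesis .
qed

lemma matrix_regret_le_bandit_regret:
  fixes s :: "'a \<Rightarrow> 'b \<Rightarrow> nat \<Rightarrow> real" and v :: "'a \<Rightarrow> 'b \<Rightarrow> real"
  assumes "finite I" and "I \<noteq> {}" and "1 \<le> t"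
    and best: "\<And>k. k \<in> I \<Longrightarrow> (\<Sum>u = 1..t. v k (jb u)) \<le> (\<Sum>u = 1..t. bandit_reward ia jb s k u) + e1 * real t"
    and played: "(\<Sum>u = 1..t. bandit_reward ia jb s (ia u) u) \<le> (\<Sum>u = 1..t. v (ia u) (jb u)) + e2 * real t"
  shows "matrix_regret I ia jb v t \<le> bandit_regret I ia jb s t + e1 + e2"
proof -
  let ?best_v = "Max ((\<lambda>k. \<Sum>u = 1..t. v k (jb u)) ` I)"
  let ?best_r = "Max ((\<lambda>k. \<Sum>u = 1..t. bandit_reward ia jb s k u) ` I)"
  have "?best_v \<le> ?best_r + e1 * real t"
    using assms(1,2) best by (rule Max_image_le_Max_image_add)
  then have "?best_v - (\<Sum>u = 1..t. v (ia u) (jb u)) \<le>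
      (?best_r - (\<Sum>u = 1..t. bandit_reward ia jb s (ia u) u)) + (e1 + e2) * real t"
    using played by (simp add: algebra_simps)
  then have "matrix_regret I ia jb v t \<le>
      ((?best_r - (\<Sum>u = 1..t. bandit_reward ia jb s (ia u) u)) + (e1 + e2) * real t) / real t"
    unfolding matrix_regret_def by (rule divide_right_mono) simp
  also have "\<dots> = bandit_regret I ia jb s t + e1 + e2"
    using assms(3) unfolding bandit_regret_def by (simp add: add_divide_distrib)
  finally show ?thesis .
qed

lemma matrix_regret_limsup_le:
  fixes s :: "'a \<Rightarrow> 'b \<Rightarrow> nat \<Rightarrow> real" and v :: "'a \<Rightarrow> 'b \<Rightarrow> real" and \<epsilon> c :: real
  assumes "finite I" and "I \<noteq> {}" and "finite J" and played: "\<And>u. 1 \<le> u \<Longrightarrow> (ia u, jb u) \<in> I \<times> J"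
    and hannan: "limsup (\<lambda>t. ereal (bandit_regret I ia jb s t)) \<le> ereal \<epsilon>"
    and upo: "\<And>a b. a \<in> I \<Longrightarrow> b \<in> J \<Longrightarrow> upo_at \<epsilon> ia jb s a b"
    and conv: "\<And>a b. a \<in> I \<Longrightarrow> b \<in> J \<Longrightarrow> limsup (\<lambda>n. ereal \<bar>avg (s a b) n - v a b\<bar>) \<le> ereal (c * \<epsilon>)"
  shows "limsup (\<lambda>t. ereal (matrix_regret I ia jb v t)) \<le> ereal (2 * (c + 1) * \<epsilon>)"
proof (rule ereal_le_epsilon2)
  fix \<delta> :: real assume "0 < \<delta>"
  define d where "d = \<delta> / 4"
  then have "0 < d" using \<open>0 < \<delta>\<close> by simp
  define e1 where "e1 = (c + 1) * \<epsilon> + 2 * d"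
  define e2 where "e2 = c * \<epsilon> + d"
  have "eventually (\<lambda>t. \<forall>a\<in>I. \<forall>b\<in>J. 1 \<le> visits ia jb a b t \<and>
      \<bar>wavg ia jb a b (s a b) (visits ia jb a b t) - v a b\<bar> \<le> e1 \<and>
      \<bar>wavg ia jb a b (s a b) (visits ia jb a b t + 1) - v a b\<bar> \<le> e1 \<and>
      \<bar>avg (s a b) (visits ia jb a b t) - v a b\<bar> \<le> e2) sequentially"
    unfolding e1_def e2_def
    by (intro eventually_ball_finite ballI assms(1,3) upo_at_eventually_estimates[OF upo conv \<open>0 < d\<close>])
      assumption+
  then have "eventually (\<lambda>t. matrix_regret I ia jb v t \<le> bandit_regret I ia jb s t + e1 + e2) sequentially"
    using eventually_ge_at_top[of 1]
  proof eventually_elim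
    case (elim t)
    show ?case
    proof (rule matrix_regret_le_bandit_regret[OF assms(1,2) \<open>1 \<le> t\<close>])
      show "(\<Sum>u = 1..t. v k (jb u)) \<le> (\<Sum>u = 1..t. bandit_reward ia jb s k u) + e1 * real t"
        if "k \<in> I" for k
        using that played elim(1) upo_at_recurrent[OF upo] by (intro sum_best_response_le[OF assms(3)]) auto
      show "(\<Sum>u = 1..t. bandit_reward ia jb s (ia u) u) \<le> (\<Sum>u = 1..t. v (ia u) (jb u)) + e2 * real t"
        using elim(1) by (intro sum_played_reward_le[OF assms(1,3) played]) auto
    qed
  qed
  with eventually_less_of_limsup_le[OF hannan \<open>0 < d\<close>]
  have "eventually (\<lambda>t. matrix_regret I ia jb v t \<le> 2 * (c + 1) * \<epsilon> + \<delta>) sequentially"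
    by eventually_elim (simp add: e1_def e2_def d_def algebra_simps)
  then have "limsup (\<lambda>t. ereal (matrix_regret I ia jb v t)) \<le> ereal (2 * (c + 1) * \<epsilon> + \<delta>)"
    by (intro Limsup_bounded) simp
  then show "limsup (\<lambda>t. ereal (matrix_regret I ia jb v t)) \<le> ereal (2 * (c + 1) * \<epsilon>) + ereal \<delta>"
    by simp
qed

theorem proposition2:
  fixes M :: "'w measure" and I :: "'a set" and J :: "'b set"
    and ia :: "'w \<Rightarrow> nat \<Rightarrow> 'a" and jb :: "'w \<Rightarrow> nat \<Rightarrow> 'b"
    and s :: "'w \<Rightarrow> 'a \<Rightarrow> 'b \<Rightarrow> nat \<Rightarrow> real"
    and v :: "'a \<Rightarrow> 'b \<Rightarrow> real" and \<epsilon> c :: real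
  assumes "prob_space M"
    and "finite I" and "I \<noteq> {}" and "finite J" and "J \<noteq> {}"
    and "\<And>\<omega> t. \<omega> \<in> space M \<Longrightarrow> 1 \<le> t \<Longrightarrow> ia \<omega> t \<in> I"
    and "\<And>\<omega> t. \<omega> \<in> space M \<Longrightarrow> 1 \<le> t \<Longrightarrow> jb \<omega> t \<in> J"
    and "\<And>\<omega> a b n. \<omega> \<in> space M \<Longrightarrow> 0 \<le> s \<omega> a b n \<and> s \<omega> a b n \<le> 1"
    and "0 \<le> \<epsilon>" and "0 \<le> c"
    and hannan: "AE \<omega> in M. limsup (\<lambda>t. ereal (bandit_regret I (ia \<omega>) (jb \<omega>) (s \<omega>) t)) \<le> ereal \<epsilon>"
    and upo: "\<And>a b. a \<in> I \<Longrightarrow> b \<in> J \<Longrightarrow> AE \<omega> in M. upo_at \<epsilon> (ia \<omega>) (jb \<omega>) (s \<omega>) a b"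
    and conv: "\<And>a b. a \<in> I \<Longrightarrow> b \<in> J \<Longrightarrow>
       AE \<omega> in M. limsup (\<lambda>n. ereal \<bar>avg (s \<omega> a b) n - v a b\<bar>) \<le> ereal (c * \<epsilon>)"
  shows "AE \<omega> in M. limsup (\<lambda>t. ereal (matrix_regret I (ia \<omega>) (jb \<omega>) v t)) \<le> ereal (2 * (c + 1) * \<epsilon>)"
proof -
  have "AE \<omega> in M. \<forall>(a, b)\<in>I \<times> J. upo_at \<epsilon> (ia \<omega>) (jb \<omega>) (s \<omega>) a b \<and>
      limsup (\<lambda>n. ereal \<bar>avg (s \<omega> a b) n - v a b\<bar>) \<le> ereal (c * \<epsilon>)"
    using assms(2,4) upo conv by (intro AE_finite_allI) auto
  with AE_space hannan show ?thesis
  proof eventually_elim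
    case (elim \<omega>)
    show ?case
      using elim assms(2-4,6,7) by (intro matrix_regret_limsup_le) auto
  qed
qed

end
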